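(* Let $\mathbf{L}$ be a Euclidean modal logic and let $\mathcal{F}^{\rho}_{A,B}$ be a galaxy in $\mathcal{K}_2$. If $\{2\}\times\mathbf{N}^{-}\subseteq\mathtt{S}_{\mathbf{L}}$, then $\mathbf{L}$ is valid in $\mathcal{F}^{\rho}_{A,B}$.
   Context: A frame is a pair $(W,R)$ with $W$ non-empty and $R\subseteq W\times W$. Modal formulas (propositional variables, $\bot,\neg,\vee,\Box$) have standard Kripke semantics; validity means truth at all points under all valuations. A (normal) modal logic contains all tautologies and K axioms and is closed under uniform substitution, modus ponens and necessitation; a Euclidean modal logic is one not containing $\bot$ and containing $\Diamond\psi\to\Box\Diamond\psi$ for all $\psi$. For sets $A,B$ with $A\cap B=\emptyset$, $A\cup B\ne\emptyset$ and $\rho:A\to\wp(B)$, the galaxy $\mathcal{F}^{\rho}_{A,B}$ has universe $A\cup B$ and relation $\bigcup_{s\in A}(\{s\}\times\rho(s))\cup(B\times B)$. $\mathcal{K}_2$ is the class of galaxies with $|A|\ge4$, $|B|\ge4$ and $|\rho(s)|=2$ for all $s\in A$. $\mathbf{N}^{+}=\{1,2,\dots\}$, $\mathbf{N}^{-}=\{-1,0,1,\dots\}$. For $m\in\mathbf{N}^{+}$, $n\ge0$, the flower $\mathcal{F}_m^n$ has universe $\{0,\dots,m+n\}$ and relation $(\{0\}\times\{1,\dots,m\})\cup\{1,\dots,m+n\}^2$; $\mathcal{F}_m^{-1}$ has universe $\{1,\dots,m\}$ and relation $\{1,\dots,m\}^2$. $\mathtt{S}_{\mathbf{L}}=\{(m,n)\in\mathbf{N}^{+}\times\mathbf{N}^{-}:\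 \mathbf{L}\text{ valid in }\mathcal{F}_m^n\}$. *)

theory Defs
  imports Main
begin

datatype 'v fm = Var 'v | Bot | Neg "'v fm" | Disj "'v fm" "'v fm" | Box "'v fm"

definition Imp :: "'v fm \<Rightarrow> 'v fm \<Rightarrow> 'v fm" where
  "Imp a b = Disj (Neg a) b"

definition Dia :: "'v fm \<Rightarrow> 'v fm" where
  "Dia a = Neg (Box (Neg a))"

fun sat :: "('a \<times> 'a) set \<Rightarrow> ('v \<Rightarrow> 'a set) \<Rightarrow> 'a \<Rightarrow> 'v fm \<Rightarrow> bool" where
  "sat R V w (Var p) = (w \<in> V p)"
| "sat R V w Bot = False"
| "sat R V w (Neg a) = (\<not> sat R V w a)"
| "sat R V w (Disj a b) = (sat R V w a \<or> sat R V w b)"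
| "sat R V w (Box a) = (\<forall>v. (w, v) \<in> R \<longrightarrow> sat R V v a)"

definition valid_in :: "'a set \<Rightarrow> ('a \<times> 'a) set \<Rightarrow> 'v fm \<Rightarrow> bool" where
  "valid_in W R a = (\<forall>V. \<forall>w\<in>W. sat R V w a)"

definition logic_valid_in :: "'v fm set \<Rightarrow> 'a set \<Rightarrow> ('a \<times> 'a) set \<Rightarrow> bool" where
  "logic_valid_in L W R = (\<forall>a\<in>L. valid_in W R a)"

fun peval :: "('v fm \<Rightarrow> bool) \<Rightarrow> 'v fm \<Rightarrow> bool" where
  "peval I (Var p) = I (Var p)"
| "peval I Bot = False"
| "peval I (Neg a) = (\<not> peval I a)"
| "peval I (Disj a b) = (peval I a \<or> peval I b)"
| "peval I (Box a) = I (Box a)"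

definition tautology :: "'v fm \<Rightarrow> bool" where
  "tautology a = (\<forall>I. peval I a)"

fun subst :: "('v \<Rightarrow> 'v fm) \<Rightarrow> 'v fm \<Rightarrow> 'v fm" where
  "subst s (Var p) = s p"
| "subst s Bot = Bot"
| "subst s (Neg a) = Neg (subst s a)"
| "subst s (Disj a b) = Disj (subst s a) (subst s b)"
| "subst s (Box a) = Box (subst s a)"

definition normal_logic :: "'v fm set \<Rightarrow> bool" where
  "normal_logic L =
     ((\<forall>a. tautology a \<longrightarrow> a \<in> L)
    \<and> (\<forall>a b. Imp (Box (Imp a b)) (Imp (Box a) (Box b)) \<in> L)
    \<and> (\<forall>s a. a \<in> L \<longrightarrow> subst s a \<in> L)
    \<and> (\<forall>a b. a \<in> L \<longrightarrow> Imp a b \<in> L \<longrightarrow> b \<in> L)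
    \<and> (\<forall>a. a \<in> L \<longrightarrow> Box a \<in> L))"

definition euclidean_logic :: "'v fm set \<Rightarrow> bool" where
  "euclidean_logic L =
     (normal_logic L \<and> Bot \<notin> L \<and> (\<forall>a. Imp (Dia a) (Box (Dia a)) \<in> L))"

definition is_galaxy :: "'a set \<Rightarrow> 'a set \<Rightarrow> ('a \<Rightarrow> 'a set) \<Rightarrow> bool" where
  "is_galaxy A B \<rho> = (A \<inter> B = {} \<and> A \<union> B \<noteq> {} \<and> (\<forall>s\<in>A. \<rho> s \<subseteq> B))"

definition galaxy_W :: "'a set \<Rightarrow> 'a set \<Rightarrow> 'a set" where
  "galaxy_W A B = A \<union> B"

definition galaxy_R :: "'a set \<Rightarrow> 'a set \<Rightarrow> ('a \<Rightarrow> 'a set) \<Rightarrow> ('a \<times> 'a) set" where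
  "galaxy_R A B \<rho> = (\<Union>s\<in>A. {s} \<times> \<rho> s) \<union> (B \<times> B)"

definition card_ge4 :: "'a set \<Rightarrow> bool" where
  "card_ge4 X = (infinite X \<or> card X \<ge> 4)"

definition in_K2 :: "'a set \<Rightarrow> 'a set \<Rightarrow> ('a \<Rightarrow> 'a set) \<Rightarrow> bool" where
  "in_K2 A B \<rho> = (is_galaxy A B \<rho> \<and> card_ge4 A \<and> card_ge4 B
                   \<and> (\<forall>s\<in>A. finite (\<rho> s) \<and> card (\<rho> s) = 2))"

definition flower_W :: "nat \<Rightarrow> int \<Rightarrow> nat set" where
  "flower_W m n = (if n = -1 then {1..m} else {0..m + nat n})"

definition flower_R :: "nat \<Rightarrow> int \<Rightarrow> (nat \<times> nat) set" where
  "flower_R m n = (if n = -1 then {1..m} \<times> {1..m}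
                   else ({0} \<times> {1..m}) \<union> ({1..m + nat n} \<times> {1..m + nat n}))"

definition S_of :: "'v fm set \<Rightarrow> (nat \<times> int) set" where
  "S_of L = {(m, n). m \<ge> 1 \<and> n \<ge> -1 \<and> logic_valid_in L (flower_W m n) (flower_R m n)}"

end

theory Submission
  imports Defs
begin

text \<open>A formula \<open>a\<close> only sees the finitely many variables \<open>X\<close> it contains, so the points of the
  cluster \<open>B\<close> fall into finitely many \<open>X\<close>-types. Choosing a representative of each type yields
  a finite cluster \<open>{1..n+2}\<close>, and a point \<open>s \<in> A\<close> whose two successors are put at positions 1
  and 2 plays the root 0 of the flower \<open>F\<^sub>2\<^sup>n\<close>. Taking \<open>s = w\<close> when \<open>w \<in> A\<close>, this gives
  an \<open>X\<close>-bisimulation relating \<open>w\<close> to a point of \<open>F\<^sub>2\<^sup>n\<close>, so validity in all \<open>F\<^sub>2\<^sup>n\<close> transfers to the galaxy.\<close>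

fun vars :: "'v fm \<Rightarrow> 'v set" where
  "vars (Var p) = {p}"
| "vars Bot = {}"
| "vars (Neg a) = vars a"
| "vars (Disj a b) = vars a \<union> vars b"
| "vars (Box a) = vars a"

lemma finite_vars: "finite (vars a)"
  by (induction a) auto

definition bisimulation ::
    "'v set \<Rightarrow> ('a \<times> 'a) set \<Rightarrow> ('v \<Rightarrow> 'a set) \<Rightarrow> ('b \<times> 'b) set \<Rightarrow> ('v \<Rightarrow> 'b set) \<Rightarrow> ('a \<times> 'b) set \<Rightarrow> bool"
  where
  "bisimulation X R V R' V' Z \<longleftrightarrow>
     (\<forall>(x, y) \<in> Z. \<forall>p \<in> X. x \<in> V p \<longleftrightarrow> y \<in> V' p) \<and>
     (\<forall>(x, y) \<in> Z. \<forall>x'. (x, x') \<in> R \<longrightarrow> (\<exists>y'. (y, y') \<in> R' \<and> (x', y') \<in> Z)) \<and>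
     (\<forall>(x, y) \<in> Z. \<forall>y'. (y, y') \<in> R' \<longrightarrow> (\<exists>x'. (x, x') \<in> R \<and> (x', y') \<in> Z))"

lemma bisimulation_sat_iff:
  assumes bisim: "bisimulation X R V R' V' Z" and "vars a \<subseteq> X" and "(x, y) \<in> Z"
  shows "sat R V x a \<longleftrightarrow> sat R' V' y a"
  using assms(2,3)
proof (induction a arbitrary: x y)
  case (Box a)
  then have IH: "\<And>x' y'. (x', y') \<in> Z \<Longrightarrow> sat R V x' a \<longleftrightarrow> sat R' V' y' a"
    by simp
  have "\<exists>y'. (y, y') \<in> R' \<and> (x', y') \<in> Z" if "(x, x') \<in> R" for x'
    using bisim Box.prems(2) that unfolding bisimulation_def by blast
  moreover have "\<exists>x'. (x, x') \<in> R \<and> (x', y') \<in> Z" if "(y, y') \<in> R'" for y'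
    using bisim Box.prems(2) that unfolding bisimulation_def by blast
  ultimately show ?case
    using IH by (metis sat.simps(5))
qed (use bisim in \<open>auto simp: bisimulation_def\<close>)

lemma sat_if_bisimilar_to_valid:
  assumes "valid_in W' R' a" and "bisimulation (vars a) R V R' V' Z"
    and "(x, y) \<in> Z" and "y \<in> W'"
  shows "sat R V x a"
proof -
  have "sat R' V' y a"
    using assms(1,4) unfolding valid_in_def by blast
  then show ?thesis
    using bisimulation_sat_iff[OF assms(2) order_refl assms(3)] by blast
qed

definition atom_type :: "'v set \<Rightarrow> ('v \<Rightarrow> 'a set) \<Rightarrow> 'a \<Rightarrow> 'v set" where
  "atom_type X V x = {p \<in> X. x \<in> V p}"

lemma finite_image_atom_type: "finite X \<Longrightarrow> finite (atom_type X V ` B)"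
  by (rule finite_subset[of _ "Pow X"]) (auto simp: atom_type_def)

lemma finite_image_representatives:
  assumes "finite (f ` B)"
  obtains C where "finite C" "C \<subseteq> B" "\<forall>x \<in> B. \<exists>y \<in> C. f y = f x"
proof
  show "finite (inv_into B f ` f ` B)" using assms by simp
  show "inv_into B f ` f ` B \<subseteq> B" by (auto intro: inv_into_into)
  show "\<forall>x \<in> B. \<exists>y \<in> inv_into B f ` f ` B. f y = f x" by (auto intro: f_inv_into_f)
qed

lemma mem_flower_R_2_iff:
  "(k, l) \<in> flower_R 2 (int n) \<longleftrightarrow> (k = 0 \<and> l \<in> {1, 2}) \<or> (k \<in> {1..n+2} \<and> l \<in> {1..n+2})"
  unfolding flower_R_def by auto

lemma mem_galaxy_R_iff:
  "(x, y) \<in> galaxy_R A B \<rho> \<longleftrightarrow> (x \<in> A \<and> y \<in> \<rho> x) \<or> (x \<in> B \<and> y \<in> B)"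
  unfolding galaxy_R_def by auto

lemma nth_Cons_image_atLeastAtMost: "nth (s # ys) ` {1..length ys} = set ys"
proof -
  have "nth (s # ys) ` {1..length ys} = nth ys ` {..<length ys}"
    unfolding image_Suc_lessThan[symmetric] image_image by simp
  also have "\<dots> = set ys"
    by (auto simp: set_conv_nth)
  finally show ?thesis .
qed

lemma galaxy_flower_bisimulation:
  assumes disjoint: "A \<inter> B = {}"
    and root: "g 0 \<in> A" "\<rho> (g 0) = {g 1, g 2}"
    and cluster: "g ` {1..n+2} \<subseteq> B"
    and types: "\<forall>x \<in> B. \<exists>k \<in> {1..n+2}. atom_type X V (g k) = atom_type X V x"
  shows "bisimulation X (galaxy_R A B \<rho>) V (flower_R 2 (int n)) (\<lambda>p. {k. g k \<in> V p})
           ({(g 0, 0)} \<union> {(x, k). x \<in> B \<and> k \<in> {1..n+2} \<and> atom_type X V x = atom_type X V (g k)})"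
    (is "bisimulation X ?R V ?R' ?V' ({(g 0, 0)} \<union> ?Z\<^sub>B)")
proof -
  have B_succ: "(x, x') \<in> ?R \<longleftrightarrow> x' \<in> B" if "x \<in> B" for x x'
    using that disjoint by (auto simp: mem_galaxy_R_iff)
  have root_succ: "(g 0, x') \<in> ?R \<longleftrightarrow> x' = g 1 \<or> x' = g 2" for x'
    using root disjoint by (auto simp: mem_galaxy_R_iff)
  have "\<forall>(x, k) \<in> {(g 0, 0)} \<union> ?Z\<^sub>B. \<forall>p \<in> X. x \<in> V p \<longleftrightarrow> k \<in> ?V' p"
    by (auto simp: atom_type_def)
  moreover have "\<forall>(x, k) \<in> {(g 0, 0)} \<union> ?Z\<^sub>B. \<forall>x'. (x, x') \<in> ?R \<longrightarrow>
                   (\<exists>l. (k, l) \<in> ?R' \<and> (x', l) \<in> {(g 0, 0)} \<union> ?Z\<^sub>B)"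
  proof (intro ballI allI impI, clarify)
    fix x k x' assume "(x, k) \<in> {(g 0, 0)} \<union> ?Z\<^sub>B" and "(x, x') \<in> ?R"
    then consider "x = g 0" "k = 0" "x' = g 1 \<or> x' = g 2" | "x \<in> B" "k \<in> {1..n+2}" "x' \<in> B"
      using root_succ B_succ by auto
    then show "\<exists>l. (k, l) \<in> ?R' \<and> (x', l) \<in> {(g 0, 0)} \<union> ?Z\<^sub>B"
    proof cases
      case 1
      then show ?thesis
        using cluster by (intro exI[of _ "if x' = g 1 then 1 else 2"]) (auto simp: mem_flower_R_2_iff)
    next
      case 2
      then obtain l where "l \<in> {1..n+2}" "atom_type X V (g l) = atom_type X V x'"
        using types by blast
      with 2 show ?thesis by (auto simp: mem_flower_R_2_iff)
    qed
  qed
  moreover have "\<forall>(x, k) \<in> {(g 0, 0)} \<union> ?Z\<^sub>B. \<forall>l. (k, l) \<in> ?R' \<longrightarrow>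
                   (\<exists>x'. (x, x') \<in> ?R \<and> (x', l) \<in> {(g 0, 0)} \<union> ?Z\<^sub>B)"
  proof (intro ballI allI impI, clarify)
    fix x k l assume "(x, k) \<in> {(g 0, 0)} \<union> ?Z\<^sub>B" and "(k, l) \<in> ?R'"
    then consider "x = g 0" "l \<in> {1, 2}" | "x \<in> B" "l \<in> {1..n+2}"
      using root(1) disjoint by (auto simp: mem_flower_R_2_iff)
    then show "\<exists>x'. (x, x') \<in> ?R \<and> (x', l) \<in> {(g 0, 0)} \<union> ?Z\<^sub>B"
    proof cases
      case 1
      then have "g l \<in> B" using cluster by auto
      with 1 show ?thesis
        using root_succ by (intro exI[of _ "g l"]) auto
    next
      case 2
      then show ?thesis
        using cluster B_succ by (intro exI[of _ "g l"]) auto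
    qed
  qed
  ultimately show ?thesis
    unfolding bisimulation_def by blast
qed

lemma sat_galaxy_if_valid_in_flowers:
  assumes galaxy: "is_galaxy A B \<rho>" and "A \<noteq> {}"
    and two_succ: "\<forall>s \<in> A. card (\<rho> s) = 2"
    and flowers: "\<forall>n. valid_in (flower_W 2 (int n)) (flower_R 2 (int n)) a"
    and w: "w \<in> A \<union> B"
  shows "sat (galaxy_R A B \<rho>) V w a"
proof -
  \<comment> \<open>For \<open>w \<in> B\<close> any root will do, since \<open>w\<close> is then matched inside the cluster.\<close>
  obtain s where s: "s \<in> A" and s_w: "w \<in> A \<Longrightarrow> s = w"
    using \<open>A \<noteq> {}\<close> by blast
  obtain b\<^sub>1 b\<^sub>2 where b: "\<rho> s = {b\<^sub>1, b\<^sub>2}"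
    using two_succ s by (meson card_2_iff)
  have disjoint: "A \<inter> B = {}" and "\<rho> s \<subseteq> B"
    using galaxy s unfolding is_galaxy_def by auto
  with b have "b\<^sub>1 \<in> B" "b\<^sub>2 \<in> B"
    by auto
  let ?type = "atom_type (vars a) V"
  obtain C where "finite C" "C \<subseteq> B" and reps: "\<forall>x \<in> B. \<exists>y \<in> C. ?type y = ?type x"
    by (rule finite_image_representatives[OF finite_image_atom_type[OF finite_vars]])
  obtain xs where xs: "set xs = C"
    using finite_list[OF \<open>finite C\<close>] by blast
  define g where "g = nth (s # b\<^sub>1 # b\<^sub>2 # xs)"
  define n where "n = length xs"
  have g_cluster: "g ` {1..n+2} = {b\<^sub>1, b\<^sub>2} \<union> C"
    using nth_Cons_image_atLeastAtMost[of s "b\<^sub>1 # b\<^sub>2 # xs"] xs by (simp add: g_def n_def)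
  have types: "\<forall>x \<in> B. \<exists>k \<in> {1..n+2}. ?type (g k) = ?type x"
  proof
    fix x assume "x \<in> B"
    then obtain y where "y \<in> C" "?type y = ?type x"
      using reps by blast
    moreover obtain k where "k \<in> {1..n+2}" "y = g k"
      using g_cluster \<open>y \<in> C\<close> by (metis UnCI imageE)
    ultimately show "\<exists>k \<in> {1..n+2}. ?type (g k) = ?type x"
      by blast
  qed
  have "g 0 = s" "g 1 = b\<^sub>1" "g 2 = b\<^sub>2"
    by (simp_all add: g_def numeral_2_eq_2)
  then have bisim: "bisimulation (vars a) (galaxy_R A B \<rho>) V (flower_R 2 (int n)) (\<lambda>p. {k. g k \<in> V p})
      ({(g 0, 0)} \<union> {(x, k). x \<in> B \<and> k \<in> {1..n+2} \<and> ?type x = ?type (g k)})"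
    (is "bisimulation _ _ _ _ _ ?Z")
    using s b g_cluster \<open>b\<^sub>1 \<in> B\<close> \<open>b\<^sub>2 \<in> B\<close> \<open>C \<subseteq> B\<close>
    by (intro galaxy_flower_bisimulation[OF disjoint _ _ _ types]) auto
  obtain k where "(w, k) \<in> ?Z" "k \<in> flower_W 2 (int n)"
  proof (cases "w \<in> A")
    case True
    then show ?thesis
      using that[of 0] \<open>g 0 = s\<close> s_w by (simp add: flower_W_def)
  next
    case False
    then have "w \<in> B"
      using w by blast
    then obtain k where "k \<in> {1..n+2}" "?type (g k) = ?type w"
      using types by blast
    then show ?thesis
      using that[of k] \<open>w \<in> B\<close> by (simp add: flower_W_def)
  qed
  then show ?thesis
    using sat_if_bisimilar_to_valid[OF flowers[rule_format] bisim] by blast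
qed

theorem lemma36:
  fixes L :: "nat fm set" and A B :: "'a set" and \<rho> :: "'a \<Rightarrow> 'a set"
  assumes "euclidean_logic L"
    and "in_K2 A B \<rho>"
    and "{2} \<times> {-1..} \<subseteq> S_of L"
  shows "logic_valid_in L (galaxy_W A B) (galaxy_R A B \<rho>)"
proof -
  have galaxy: "is_galaxy A B \<rho>" and "A \<noteq> {}" and "\<forall>s \<in> A. card (\<rho> s) = 2"
    using assms(2) unfolding in_K2_def card_ge4_def by auto
  have "(2, int n) \<in> S_of L" for n
    using assms(3) by auto
  then have "\<forall>n. valid_in (flower_W 2 (int n)) (flower_R 2 (int n)) a" if "a \<in> L" for a
    using that unfolding S_of_def logic_valid_in_def by blast
  then show ?thesis
    using sat_galaxy_if_valid_in_flowers[OF galaxy \<open>A \<noteq> {}\<close> \<open>\<forall>s \<in> A. card (\<rho> s) = 2\<close>]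
    unfolding logic_valid_in_def valid_in_def galaxy_W_def by blast
qed

end
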